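(* Let $a,b,\epsilon>0$ and let $n,U,d,m$ be positive integers. Let $X\in\mathbb{R}^{n\times U\times d}$ satisfy $\|X_{i,u,\cdot}\|_2\le b$ for all $i\in\{1,\dots,n\}$, $u\in\{1,\dots,U\}$, and let $M\in\mathbb{R}^{d\times m}$ be any fixed matrix. Then $$\log\mathcal{N}\Big(\{XA:\ A\in\mathbb{R}^{d\times m},\ \|A-M\|_{2,1}\le a\},\ \epsilon,\ \|\cdot\|_{*}\Big)\ \le\ \frac{64a^2b^2}{\epsilon^2}\log_2\!\Big[\Big(\frac{8ab}{\epsilon}+7\Big)mnU\Big],$$ where for $Y\in\mathbb{R}^{n\times U\times m}$, $\|Y\|_*=\max_{i\le n}\max_{u\le U}\big(\sum_{k=1}^m Y_{i,u,k}^2\big)^{1/2}$.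
   Context: For $X\in\mathbb{R}^{n\times U\times d}$ and $A\in\mathbb{R}^{d\times m}$, $XA\in\mathbb{R}^{n\times U\times m}$ is defined by $(XA)_{i,u,j}=\sum_{o=1}^d X_{i,u,o}A_{o,j}$. For $B\in\mathbb{R}^{d\times m}$, $\|B\|_{2,1}=\sum_{j=1}^m\|B_{\cdot,j}\|_2$ (sum over the $m$ columns/output channels of their Euclidean norms). For a subset $V$ of a normed space $(\mathbb{R}^N,\|\cdot\|)$, the covering number $\mathcal{N}(V,\epsilon,\|\cdot\|)$ is the minimum cardinality $k$ of a collection $v^1,\dots,v^k\in\mathbb{R}^N$ with $\sup_{v\in V}\min_j\|v-v^j\|\le\epsilon$. $\log$ denotes the natural logarithm. *)

theory Defs
  imports "HOL-Analysis.Analysis"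
begin

text \<open>Order-3 tensors in R^(n x U x k) are represented as functions
  nat => nat => nat => real (indices 0-based, only entries i<n, u<U, o<k matter);
  matrices in R^(d x m) as nat => nat => real.\<close>

definition tensor_mat_mult ::
  "nat \<Rightarrow> nat \<Rightarrow> nat \<Rightarrow> (nat \<Rightarrow> nat \<Rightarrow> nat \<Rightarrow> real) \<Rightarrow> (nat \<Rightarrow> nat \<Rightarrow> real)
   \<Rightarrow> (nat \<Rightarrow> nat \<Rightarrow> nat \<Rightarrow> real)" where
  "tensor_mat_mult n U d X A =
     (\<lambda>i u j. if i < n \<and> u < U then (\<Sum>l<d. X i u l * A l j) else 0)"

definition norm21 :: "nat \<Rightarrow> nat \<Rightarrow> (nat \<Rightarrow> nat \<Rightarrow> real) \<Rightarrow> real" where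
  "norm21 d m B = (\<Sum>j<m. sqrt (\<Sum>l<d. (B l j)\<^sup>2))"

definition star_norm :: "nat \<Rightarrow> nat \<Rightarrow> nat \<Rightarrow> (nat \<Rightarrow> nat \<Rightarrow> nat \<Rightarrow> real) \<Rightarrow> real" where
  "star_norm n U m Y = Max {sqrt (\<Sum>k<m. (Y i u k)\<^sup>2) | i u. i < n \<and> u < U}"

definition covering_number :: "'a set \<Rightarrow> 'a set \<Rightarrow> real \<Rightarrow> ('a \<Rightarrow> 'a \<Rightarrow> real) \<Rightarrow> enat" where
  "covering_number S V eps dist_fn =
     (INF C \<in> {C. C \<subseteq> S \<and> finite C \<and> (\<forall>v\<in>V. \<exists>c\<in>C. dist_fn v c \<le> eps)}. enat (card C))"

definition tensor_space :: "nat \<Rightarrow> nat \<Rightarrow> nat \<Rightarrow> (nat \<Rightarrow> nat \<Rightarrow> nat \<Rightarrow> real) set" where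
  "tensor_space n U m = {Y. \<forall>i u k. \<not>(i < n \<and> u < U \<and> k < m) \<longrightarrow> Y i u k = 0}"

end

theory Submission
  imports Defs
begin

text \<open>Maurey-type covering via the perceptron. For a column v of A - M with norm \<alpha>, the
  perceptron run on the points X(i,u) with step \<eta> stops after at most |v|^2/(\<eta>^2 b^2) updates,
  and then every inner product of the residual with a point X(i,u) is at most \<eta> b^2. Choosing
  \<eta> proportional to sqrt \<alpha> (quantised to K+1 levels) balances the number of updates,
  at most 8 a \<alpha> b^2/eps^2, against the squared residual, at most \<alpha> (eps^2/(2a) + 2 a b^2/K^2).
  Summing over the columns, the update lists of all columns together have total length at most
  8 a^2 b^2/eps^2 and produce an approximation within eps. Such a list is a word of that length
  over an alphabet of n U m 2(K+1) letters (point, column, sign, level), which bounds the covering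
  number.\<close>

definition signed_sum :: "real \<Rightarrow> ('p \<Rightarrow> nat \<Rightarrow> real) \<Rightarrow> ('p \<times> bool) list \<Rightarrow> nat \<Rightarrow> real" where
  "signed_sum \<eta> x L l = sum_list (map (\<lambda>(p, s). (if s then 1 else -1) * \<eta> * x p l) L)"

lemma signed_sum_Nil [simp]: "signed_sum \<eta> x [] l = 0"
  by (simp add: signed_sum_def)

lemma signed_sum_Cons [simp]:
  "signed_sum \<eta> x ((p, s) # L) l = (if s then 1 else -1) * \<eta> * x p l + signed_sum \<eta> x L l"
  by (simp add: signed_sum_def)

lemma perceptron_step:
  fixes y x :: "nat \<Rightarrow> real"
  assumes x: "(\<Sum>l<d. (x l)\<^sup>2) \<le> b\<^sup>2" and "\<eta> > 0"
    and mistake: "\<eta> * b\<^sup>2 < \<bar>\<Sum>l<d. y l * x l\<bar>"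
  defines "\<sigma> \<equiv> if (\<Sum>l<d. y l * x l) > 0 then 1 else -1 :: real"
  shows "(\<Sum>l<d. (y l - \<sigma> * \<eta> * x l)\<^sup>2) \<le> (\<Sum>l<d. (y l)\<^sup>2) - \<eta>\<^sup>2 * b\<^sup>2"
proof -
  define E where "E = (\<Sum>l<d. y l * x l)"
  have \<sigma>E: "\<sigma> * E = \<bar>E\<bar>" and \<sigma>2: "\<sigma>\<^sup>2 = 1"
    using mistake by (auto simp: \<sigma>_def E_def)
  have "(\<Sum>l<d. (y l - \<sigma> * \<eta> * x l)\<^sup>2)
      = (\<Sum>l<d. (y l)\<^sup>2 - 2 * (\<sigma> * \<eta>) * (y l * x l) + (\<sigma> * \<eta>)\<^sup>2 * (x l)\<^sup>2)"
    by (rule sum.cong) (auto simp: power2_eq_square algebra_simps)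
  also have "\<dots> = (\<Sum>l<d. (y l)\<^sup>2) - 2 * \<eta> * (\<sigma> * E) + \<eta>\<^sup>2 * (\<Sum>l<d. (x l)\<^sup>2)"
    by (simp add: sum.distrib sum_subtractf sum_distrib_left power_mult_distrib \<sigma>2 E_def
        mult.assoc mult.left_commute)
  also have "\<dots> = (\<Sum>l<d. (y l)\<^sup>2) - 2 * \<eta> * \<bar>E\<bar> + \<eta>\<^sup>2 * (\<Sum>l<d. (x l)\<^sup>2)"
    by (simp add: \<sigma>E)
  also have "\<dots> \<le> (\<Sum>l<d. (y l)\<^sup>2) - 2 * \<eta> * (\<eta> * b\<^sup>2) + \<eta>\<^sup>2 * b\<^sup>2"
    using mistake x \<open>\<eta> > 0\<close> by (auto simp: E_def intro!: add_mono diff_mono mult_left_mono)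
  finally show ?thesis by (simp add: power2_eq_square)
qed

lemma perceptron_mistake_bound:
  fixes v w :: "nat \<Rightarrow> real" and x :: "'p \<Rightarrow> nat \<Rightarrow> real"
  assumes x: "\<forall>p\<in>P. (\<Sum>l<d. (x p l)\<^sup>2) \<le> b\<^sup>2" and "\<eta> > 0" "b > 0"
  shows "\<exists>L. set L \<subseteq> P \<times> UNIV
    \<and> real (length L) \<le> (\<Sum>l<d. (v l - w l)\<^sup>2) / (\<eta>\<^sup>2 * b\<^sup>2)
    \<and> (\<forall>p\<in>P. \<bar>\<Sum>l<d. (v l - (w l + signed_sum \<eta> x L l)) * x p l\<bar> \<le> \<eta> * b\<^sup>2)"
proof (induction "nat \<lceil>(\<Sum>l<d. (v l - w l)\<^sup>2) / (\<eta>\<^sup>2 * b\<^sup>2)\<rceil>" arbitrary: w rule: less_induct)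
  case less
  define D where "D = \<eta>\<^sup>2 * b\<^sup>2"
  have D: "D > 0" using assms by (simp add: D_def)
  define \<Phi> where "\<Phi> w = (\<Sum>l<d. (v l - w l)\<^sup>2)" for w
  have \<Phi>_nonneg: "0 \<le> \<Phi> w" for w by (simp add: \<Phi>_def sum_nonneg)
  show ?case
  proof (cases "\<forall>p\<in>P. \<bar>\<Sum>l<d. (v l - w l) * x p l\<bar> \<le> \<eta> * b\<^sup>2")
    case True
    then show ?thesis using \<Phi>_nonneg[of w] D by (intro exI[of _ "[]"]) (simp add: \<Phi>_def D_def)
  next
    case False
    then obtain p where p: "p \<in> P" and mistake: "\<eta> * b\<^sup>2 < \<bar>\<Sum>l<d. (v l - w l) * x p l\<bar>"
      by (auto simp: not_le)
    define s where "s = ((\<Sum>l<d. (v l - w l) * x p l) > 0)"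
    define w' where "w' l = w l + (if s then 1 else -1) * \<eta> * x p l" for l
    have "\<Phi> w' \<le> \<Phi> w - D"
      using perceptron_step[OF x[rule_format, OF p] \<open>\<eta> > 0\<close> mistake]
      by (simp add: \<Phi>_def D_def w'_def s_def algebra_simps)
    hence "\<Phi> w' / D \<le> \<Phi> w / D - 1" using D by (simp add: field_simps)
    moreover have "0 \<le> \<Phi> w' / D" using \<Phi>_nonneg D by simp
    ultimately have "nat \<lceil>\<Phi> w' / D\<rceil> < nat \<lceil>\<Phi> w / D\<rceil>" by linarith
    then obtain L where L: "set L \<subseteq> P \<times> UNIV" "real (length L) \<le> \<Phi> w' / D"
      "\<forall>p\<in>P. \<bar>\<Sum>l<d. (v l - (w' l + signed_sum \<eta> x L l)) * x p l\<bar> \<le> \<eta> * b\<^sup>2"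
      using less[of w'] by (auto simp: \<Phi>_def D_def)
    have step_eq: "w' l + signed_sum \<eta> x L l = w l + signed_sum \<eta> x ((p, s) # L) l" for l
      by (simp add: w'_def)
    from L(3) have "\<forall>q\<in>P. \<bar>\<Sum>l<d. (v l - (w l + signed_sum \<eta> x ((p, s) # L) l)) * x q l\<bar> \<le> \<eta> * b\<^sup>2"
      by (simp only: step_eq)
    moreover have "real (length ((p, s) # L)) \<le> \<Phi> w / D"
      using L(2) \<open>\<Phi> w' / D \<le> \<Phi> w / D - 1\<close> by simp
    ultimately show ?thesis using L p by (intro exI[of _ "(p, s) # L"]) (auto simp: \<Phi>_def D_def)
  qed
qed

definition step_level :: "nat \<Rightarrow> real \<Rightarrow> real \<Rightarrow> nat" where
  "step_level K a \<alpha> = nat \<lfloor>real K * sqrt (\<alpha> / (2 * a))\<rfloor>"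

lemma step_level_floor:
  fixes K :: nat
  assumes "a > 0" "\<alpha> \<ge> 0"
  defines "r \<equiv> real K * sqrt (\<alpha> / (2 * a))"
  shows "real (step_level K a \<alpha>) \<le> r" "r < real (step_level K a \<alpha>) + 1"
    and "2 * a * r\<^sup>2 = (real K)\<^sup>2 * \<alpha>"
proof -
  have "r \<ge> 0" using assms by (simp add: r_def)
  then show "real (step_level K a \<alpha>) \<le> r" "r < real (step_level K a \<alpha>) + 1"
    by (simp_all add: step_level_def r_def[symmetric])
  show "2 * a * r\<^sup>2 = (real K)\<^sup>2 * \<alpha>"
    using assms by (simp add: r_def power_mult_distrib)
qed

lemma step_level_le:
  assumes "a > 0" "0 \<le> \<alpha>" "\<alpha> \<le> a"
  shows "step_level K a \<alpha> \<le> K"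
proof -
  have "sqrt (\<alpha> / (2 * a)) \<le> 1" using assms by simp
  then have "real K * sqrt (\<alpha> / (2 * a)) \<le> real K" by (simp add: mult_left_le)
  then show ?thesis using step_level_floor(1)[OF assms(1,2), of K] by linarith
qed

lemma step_level_sq_le:
  assumes "a > 0" "\<alpha> \<ge> 0"
  shows "2 * a * (real (step_level K a \<alpha>))\<^sup>2 \<le> (real K)\<^sup>2 * \<alpha>"
  using step_level_floor[OF assms, of K] assms(1)
  by (metis mult_left_mono of_nat_0_le_iff power_mono less_eq_real_def mult_pos_pos zero_less_numeral)

lemma step_level_zero:
  assumes "a > 0" "\<alpha> \<ge> 0" "step_level K a \<alpha> = 0"
  shows "(real K)\<^sup>2 * \<alpha> < 2 * a"
proof -
  define r where "r = real K * sqrt (\<alpha> / (2 * a))"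
  have "0 \<le> r" "r < 1" using step_level_floor[OF assms(1,2), of K] assms(3) by (simp_all add: r_def)
  then have "2 * a * r\<^sup>2 < 2 * a * 1" using assms(1) by (simp add: power_less_one_iff abs_square_less_1)
  then show ?thesis using step_level_floor(3)[OF assms(1,2), of K] by (simp add: r_def)
qed

lemma step_level_pos:
  assumes "a > 0" "\<alpha> \<ge> 0" "step_level K a \<alpha> \<ge> 1"
  shows "(real K)\<^sup>2 * \<alpha> < 8 * a * (real (step_level K a \<alpha>))\<^sup>2"
proof -
  define r where "r = real K * sqrt (\<alpha> / (2 * a))"
  define k where "k = real (step_level K a \<alpha>)"
  have "0 \<le> r" "r < 2 * k"
    using step_level_floor[OF assms(1,2), of K] assms(3) by (simp_all add: r_def k_def)
  then have "r\<^sup>2 < (2 * k)\<^sup>2" using power_strict_mono[of r "2 * k" 2] by simp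
  then have "2 * a * r\<^sup>2 < 2 * a * (2 * k)\<^sup>2" using assms(1) by simp
  moreover have "2 * a * r\<^sup>2 = (real K)\<^sup>2 * \<alpha>"
    unfolding r_def by (rule step_level_floor(3)[OF assms(1,2)])
  ultimately show ?thesis by (simp add: k_def power_mult_distrib)
qed

lemma column_approximation:
  fixes x :: "'p \<Rightarrow> nat \<Rightarrow> real" and v :: "nat \<Rightarrow> real" and K :: nat
  assumes "a > 0" "b > 0" "eps > 0" and K: "4 * a * b / eps \<le> real K"
    and x: "\<forall>p\<in>P. (\<Sum>l<d. (x p l)\<^sup>2) \<le> b\<^sup>2"
    and \<alpha>: "\<alpha> = sqrt (\<Sum>l<d. (v l)\<^sup>2)"
  defines "\<eta> \<equiv> eps / b\<^sup>2 * real (step_level K a \<alpha>) / real K"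
  obtains L where "set L \<subseteq> P \<times> UNIV" "real (length L) \<le> 8 * a * \<alpha> * b\<^sup>2 / eps\<^sup>2"
    and "\<And>p. p \<in> P \<Longrightarrow> (\<Sum>l<d. (v l - signed_sum \<eta> x L l) * x p l)\<^sup>2
                          \<le> \<alpha> * (eps\<^sup>2 / (2 * a) + 2 * a * b\<^sup>2 / (real K)\<^sup>2)"
proof -
  define k where "k = step_level K a \<alpha>"
  have "\<alpha> \<ge> 0" and \<alpha>2: "\<alpha>\<^sup>2 = (\<Sum>l<d. (v l)\<^sup>2)" using \<alpha> by (simp_all add: sum_nonneg)
  have "4 * a * b / eps > 0" using assms by simp
  then have "real K > 0" using K by linarith
  show ?thesis
  proof (cases "k = 0")
    case True
    have "(\<Sum>l<d. (v l - signed_sum \<eta> x [] l) * x p l)\<^sup>2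
          \<le> \<alpha> * (eps\<^sup>2 / (2 * a) + 2 * a * b\<^sup>2 / (real K)\<^sup>2)" if "p \<in> P" for p
    proof -
      have "(\<Sum>l<d. v l * x p l)\<^sup>2 \<le> \<alpha>\<^sup>2 * (\<Sum>l<d. (x p l)\<^sup>2)"
        unfolding \<alpha>2 by (rule Cauchy_Schwarz_ineq_sum)
      also have "\<dots> \<le> \<alpha>\<^sup>2 * b\<^sup>2" using x that by (simp add: mult_left_mono)
      also have "\<dots> \<le> \<alpha> * (2 * a * b\<^sup>2 / (real K)\<^sup>2)"
      proof -
        have "\<alpha> * ((real K)\<^sup>2 * \<alpha>) \<le> \<alpha> * (2 * a)"
          using step_level_zero[OF \<open>a > 0\<close> \<open>\<alpha> \<ge> 0\<close>, of K] True \<open>\<alpha> \<ge> 0\<close>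
          by (intro mult_left_mono) (simp_all add: k_def)
        then have "\<alpha> * ((real K)\<^sup>2 * \<alpha>) * (b\<^sup>2 / (real K)\<^sup>2) \<le> \<alpha> * (2 * a) * (b\<^sup>2 / (real K)\<^sup>2)"
          by (rule mult_right_mono) simp
        then show ?thesis using \<open>real K > 0\<close> by (simp add: power2_eq_square)
      qed
      also have "\<dots> \<le> \<alpha> * (eps\<^sup>2 / (2 * a) + 2 * a * b\<^sup>2 / (real K)\<^sup>2)"
        using \<open>\<alpha> \<ge> 0\<close> \<open>a > 0\<close> by (intro mult_left_mono) simp_all
      finally show ?thesis by simp
    qed
    then show ?thesis using that[of "[]"] \<open>\<alpha> \<ge> 0\<close> assms(1-3) by simp
  next
    case False
    then have "\<eta> > 0" using assms \<open>real K > 0\<close> by (simp add: \<eta>_def k_def)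
    then obtain L where L: "set L \<subseteq> P \<times> UNIV" "real (length L) \<le> \<alpha>\<^sup>2 / (\<eta>\<^sup>2 * b\<^sup>2)"
      "\<And>p. p \<in> P \<Longrightarrow> \<bar>\<Sum>l<d. (v l - signed_sum \<eta> x L l) * x p l\<bar> \<le> \<eta> * b\<^sup>2"
      using perceptron_mistake_bound[OF x _ \<open>b > 0\<close>, of \<eta> v "\<lambda>_. 0"] \<alpha>2 by auto
    have \<eta>b: "\<eta> * b\<^sup>2 = eps * real k / real K" using \<open>b > 0\<close> by (simp add: \<eta>_def k_def)
    have "real (length L) \<le> 8 * a * \<alpha> * b\<^sup>2 / eps\<^sup>2"
    proof -
      have "\<alpha> * ((real K)\<^sup>2 * \<alpha>) \<le> \<alpha> * (8 * a * (real k)\<^sup>2)"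
        using step_level_pos[OF \<open>a > 0\<close> \<open>\<alpha> \<ge> 0\<close>, of K] False \<open>\<alpha> \<ge> 0\<close>
        by (intro mult_left_mono) (simp_all add: k_def)
      then have "\<alpha> * ((real K)\<^sup>2 * \<alpha>) * (b\<^sup>2 / (eps * real k)\<^sup>2)
               \<le> \<alpha> * (8 * a * (real k)\<^sup>2) * (b\<^sup>2 / (eps * real k)\<^sup>2)"
        by (rule mult_right_mono) simp
      moreover have "\<alpha>\<^sup>2 / (\<eta>\<^sup>2 * b\<^sup>2) = \<alpha> * ((real K)\<^sup>2 * \<alpha>) * (b\<^sup>2 / (eps * real k)\<^sup>2)"
        using assms(2,3) \<open>real K > 0\<close> False
        by (simp add: \<eta>_def k_def field_simps power2_eq_square)
      moreover have "\<alpha> * (8 * a * (real k)\<^sup>2) * (b\<^sup>2 / (eps * real k)\<^sup>2) = 8 * a * \<alpha> * b\<^sup>2 / eps\<^sup>2"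
        using assms(3) False by (simp add: field_simps power2_eq_square)
      ultimately show ?thesis using L(2) by linarith
    qed
    moreover have "(\<Sum>l<d. (v l - signed_sum \<eta> x L l) * x p l)\<^sup>2
          \<le> \<alpha> * (eps\<^sup>2 / (2 * a) + 2 * a * b\<^sup>2 / (real K)\<^sup>2)" if "p \<in> P" for p
    proof -
      have "(\<Sum>l<d. (v l - signed_sum \<eta> x L l) * x p l)\<^sup>2 \<le> (eps * real k / real K)\<^sup>2"
        using L(3)[OF that] \<eta>b \<open>eps > 0\<close> by (simp flip: abs_le_square_iff)
      also have "\<dots> \<le> eps\<^sup>2 * \<alpha> / (2 * a)"
        using step_level_sq_le[OF \<open>a > 0\<close> \<open>\<alpha> \<ge> 0\<close>, of K] assms(1,3) \<open>real K > 0\<close>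
        by (simp add: k_def field_simps power_mult_distrib power_divide)
      also have "\<dots> \<le> \<alpha> * (eps\<^sup>2 / (2 * a) + 2 * a * b\<^sup>2 / (real K)\<^sup>2)"
        using \<open>\<alpha> \<ge> 0\<close> \<open>a > 0\<close> by (simp add: field_simps)
      finally show ?thesis .
    qed
    ultimately show ?thesis using that L(1) by blast
  qed
qed

lemma quantization_error_le:
  assumes "a > 0" "b > 0" "eps > 0" and K: "4 * a * b / eps \<le> real K"
  shows "a * (eps\<^sup>2 / (2 * a) + 2 * a * b\<^sup>2 / (real K)\<^sup>2) \<le> eps\<^sup>2"
proof -
  have "(4 * a * b / eps)\<^sup>2 \<le> (real K)\<^sup>2" using K assms by (intro power_mono) auto
  then have "16 * a\<^sup>2 * b\<^sup>2 \<le> (real K)\<^sup>2 * eps\<^sup>2"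
    using assms by (simp add: field_simps power_divide power_mult_distrib)
  moreover have "real K > 0" using K assms by (smt (verit) divide_pos_pos mult_pos_pos)
  ultimately have "2 * a\<^sup>2 * b\<^sup>2 / (real K)\<^sup>2 \<le> eps\<^sup>2 / 8"
    by (simp add: field_simps)
  moreover have "a * (eps\<^sup>2 / (2 * a) + 2 * a * b\<^sup>2 / (real K)\<^sup>2) = eps\<^sup>2 / 2 + 2 * a\<^sup>2 * b\<^sup>2 / (real K)\<^sup>2"
    using assms(1) by (simp add: field_simps power2_eq_square)
  ultimately show ?thesis using zero_le_power2[of eps] by linarith
qed

text \<open>A code letter (i, u, j, s, k) stands for adding (+/-) (c k/K) X(i,u) to column j of the
  matrix; a code is a list of letters.\<close>

type_synonym code_letter = "nat \<times> nat \<times> nat \<times> bool \<times> nat"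

definition code_alphabet :: "nat \<Rightarrow> nat \<Rightarrow> nat \<Rightarrow> nat \<Rightarrow> code_letter set" where
  "code_alphabet n U m K = {..<n} \<times> {..<U} \<times> {..<m} \<times> UNIV \<times> {..K}"

definition code_weight ::
  "real \<Rightarrow> nat \<Rightarrow> (nat \<Rightarrow> nat \<Rightarrow> nat \<Rightarrow> real) \<Rightarrow> code_letter list \<Rightarrow> nat \<Rightarrow> nat \<Rightarrow> real" where
  "code_weight c K X cs l j = sum_list (map (\<lambda>(i, u, j', s, k).
     if j' = j then (if s then 1 else -1) * (c * real k / real K) * X i u l else 0) cs)"

definition code_tensor :: "nat \<Rightarrow> nat \<Rightarrow> nat \<Rightarrow> nat \<Rightarrow> (nat \<Rightarrow> nat \<Rightarrow> nat \<Rightarrow> real)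
    \<Rightarrow> (nat \<Rightarrow> nat \<Rightarrow> real) \<Rightarrow> real \<Rightarrow> nat \<Rightarrow> code_letter list \<Rightarrow> nat \<Rightarrow> nat \<Rightarrow> nat \<Rightarrow> real" where
  "code_tensor n U m d X M c K cs = (\<lambda>i u j.
     if i < n \<and> u < U \<and> j < m then (\<Sum>l<d. X i u l * (M l j + code_weight c K X cs l j)) else 0)"

definition column_code :: "nat \<Rightarrow> nat \<Rightarrow> ((nat \<times> nat) \<times> bool) list \<Rightarrow> code_letter list" where
  "column_code j k L = map (\<lambda>((i, u), s). (i, u, j, s, k)) L"

lemma card_code_alphabet: "card (code_alphabet n U m K) = n * U * m * 2 * (K + 1)"
  by (simp add: code_alphabet_def card_cartesian_product algebra_simps)

lemma code_weight_append:
  "code_weight c K X (cs @ cs') l j = code_weight c K X cs l j + code_weight c K X cs' l j"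
  by (simp add: code_weight_def)

lemma code_weight_level_zero: "code_weight c K X (replicate r (i, u, j', s, 0)) l j = 0"
  by (induction r) (auto simp: code_weight_def)

lemma code_weight_column_code:
  "code_weight c K X (column_code j' k L) l j =
     (if j' = j then signed_sum (c * real k / real K) (\<lambda>(i, u). X i u) L l else 0)"
  by (induction L) (auto simp: code_weight_def column_code_def signed_sum_def)

lemma code_weight_concat:
  "code_weight c K X (concat (map g [0..<m])) l j = (\<Sum>j'<m. code_weight c K X (g j') l j)"
  by (induction m) (auto simp: code_weight_append code_weight_def)

lemma code_of_columns:
  assumes "\<forall>j<m. set (L j) \<subseteq> ({..<n} \<times> {..<U}) \<times> UNIV" and "\<forall>j<m. k j \<le> K"
  defines "cs \<equiv> concat (map (\<lambda>j. column_code j (k j) (L j)) [0..<m])"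
  shows "set cs \<subseteq> code_alphabet n U m K"
    and "length cs = (\<Sum>j<m. length (L j))"
    and "\<And>j. j < m \<Longrightarrow> code_weight c K X cs l j = signed_sum (c * real (k j) / real K) (\<lambda>(i, u). X i u) (L j) l"
proof -
  show "set cs \<subseteq> code_alphabet n U m K"
    using assms(1,2) by (fastforce simp: cs_def column_code_def code_alphabet_def)
  show "length cs = (\<Sum>j<m. length (L j))"
    by (simp add: cs_def column_code_def length_concat sum_list_sum_nth atLeast0LessThan)
  show "code_weight c K X cs l j = signed_sum (c * real (k j) / real K) (\<lambda>(i, u). X i u) (L j) l"
    if "j < m" for j
    using that by (simp add: cs_def code_weight_concat code_weight_column_code)
qed

lemma star_norm_le:
  assumes "n > 0" "U > 0" "\<forall>i<n. \<forall>u<U. sqrt (\<Sum>k<m. (Y i u k)\<^sup>2) \<le> e"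
  shows "star_norm n U m Y \<le> e"
proof -
  have "{sqrt (\<Sum>k<m. (Y i u k)\<^sup>2) | i u. i < n \<and> u < U}
      = (\<lambda>(i, u). sqrt (\<Sum>k<m. (Y i u k)\<^sup>2)) ` ({..<n} \<times> {..<U})" by auto
  moreover have "{..<n} \<times> {..<U} \<noteq> {}" using assms by auto
  ultimately show ?thesis using assms(3) unfolding star_norm_def by (simp add: Max_le_iff)
qed

lemma code_approximation:
  fixes K N :: nat
  assumes "a > 0" "b > 0" "eps > 0" "n > 0" "U > 0" "m > 0"
    and X: "\<forall>i<n. \<forall>u<U. sqrt (\<Sum>l<d. (X i u l)\<^sup>2) \<le> b"
    and K: "4 * a * b / eps \<le> real K" and N: "N = nat \<lfloor>8 * a\<^sup>2 * b\<^sup>2 / eps\<^sup>2\<rfloor>"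
    and A: "norm21 d m (\<lambda>l j. A l j - M l j) \<le> a"
  obtains cs where "set cs \<subseteq> code_alphabet n U m K" "length cs = N"
    "star_norm n U m (\<lambda>i u k. tensor_mat_mult n U d X A i u k
                               - code_tensor n U m d X M (eps / b\<^sup>2) K cs i u k) \<le> eps"
proof -
  define P where "P = {..<n} \<times> {..<U}"
  define x :: "nat \<times> nat \<Rightarrow> nat \<Rightarrow> real" where "x = (\<lambda>(i, u). X i u)"
  define \<alpha> where "\<alpha> j = sqrt (\<Sum>l<d. (A l j - M l j)\<^sup>2)" for j
  define lev where "lev j = step_level K a (\<alpha> j)" for j
  define \<eta> where "\<eta> j = eps / b\<^sup>2 * real (lev j) / real K" for j
  define E where "E = eps\<^sup>2 / (2 * a) + 2 * a * b\<^sup>2 / (real K)\<^sup>2"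
  have \<alpha>_nonneg: "0 \<le> \<alpha> j" for j by (simp add: \<alpha>_def sum_nonneg)
  have \<alpha>_sum: "(\<Sum>j<m. \<alpha> j) \<le> a" using A by (simp add: norm21_def \<alpha>_def)
  have \<alpha>_le: "\<alpha> j \<le> a" if "j < m" for j
    using member_le_sum[of j "{..<m}" \<alpha>] \<alpha>_nonneg that \<alpha>_sum by fastforce
  have x: "\<forall>p\<in>P. (\<Sum>l<d. (x p l)\<^sup>2) \<le> b\<^sup>2"
    using X by (auto simp: P_def x_def intro: sqrt_le_D)
  have "\<forall>j. \<exists>L. set L \<subseteq> P \<times> UNIV \<and> real (length L) \<le> 8 * a * \<alpha> j * b\<^sup>2 / eps\<^sup>2
      \<and> (\<forall>p\<in>P. (\<Sum>l<d. (A l j - M l j - signed_sum (\<eta> j) x L l) * x p l)\<^sup>2 \<le> \<alpha> j * E)"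
  proof
    fix j
    obtain L where "set L \<subseteq> P \<times> UNIV" "real (length L) \<le> 8 * a * \<alpha> j * b\<^sup>2 / eps\<^sup>2"
      "\<And>p. p \<in> P \<Longrightarrow> (\<Sum>l<d. (A l j - M l j - signed_sum (\<eta> j) x L l) * x p l)\<^sup>2 \<le> \<alpha> j * E"
      using column_approximation[OF assms(1-3) K x \<alpha>_def[of j]]
      unfolding \<eta>_def lev_def E_def by blast
    then show "\<exists>L. set L \<subseteq> P \<times> UNIV \<and> real (length L) \<le> 8 * a * \<alpha> j * b\<^sup>2 / eps\<^sup>2
      \<and> (\<forall>p\<in>P. (\<Sum>l<d. (A l j - M l j - signed_sum (\<eta> j) x L l) * x p l)\<^sup>2 \<le> \<alpha> j * E)"
      by blast
  qed
  from choice[OF this] obtain Lf where Lf: "\<forall>j. set (Lf j) \<subseteq> P \<times> UNIV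
      \<and> real (length (Lf j)) \<le> 8 * a * \<alpha> j * b\<^sup>2 / eps\<^sup>2
      \<and> (\<forall>p\<in>P. (\<Sum>l<d. (A l j - M l j - signed_sum (\<eta> j) x (Lf j) l) * x p l)\<^sup>2 \<le> \<alpha> j * E)"
    by blast
  have Lf_set: "\<forall>j<m. set (Lf j) \<subseteq> ({..<n} \<times> {..<U}) \<times> UNIV" using Lf by (simp add: P_def)
  have lev_le: "\<forall>j<m. lev j \<le> K"
    using step_level_le[OF \<open>a > 0\<close> \<alpha>_nonneg \<alpha>_le] by (simp add: lev_def)
  define cs0 where "cs0 = concat (map (\<lambda>j. column_code j (lev j) (Lf j)) [0..<m])"
  define cs where "cs = cs0 @ replicate (N - length cs0) (0, 0, 0, True, 0)"
  note cs0 = code_of_columns[OF Lf_set lev_le, folded cs0_def]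
  have "real (length cs0) \<le> 8 * a\<^sup>2 * b\<^sup>2 / eps\<^sup>2"
  proof -
    have "real (length cs0) = (\<Sum>j<m. real (length (Lf j)))" using cs0(2) by simp
    also have "\<dots> \<le> (\<Sum>j<m. 8 * a * \<alpha> j * b\<^sup>2 / eps\<^sup>2)" using Lf by (intro sum_mono) blast
    also have "\<dots> = (\<Sum>j<m. \<alpha> j) * (8 * a * b\<^sup>2 / eps\<^sup>2)"
      by (subst sum_distrib_right) (simp add: field_simps)
    also have "\<dots> \<le> a * (8 * a * b\<^sup>2 / eps\<^sup>2)" using \<alpha>_sum assms(1) by (intro mult_right_mono) auto
    finally show ?thesis by (simp add: power2_eq_square mult.commute mult.left_commute)
  qed
  then have "length cs0 \<le> N" unfolding N by (rule le_nat_floor)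
  then have "length cs = N" by (simp add: cs_def)
  moreover have "set cs \<subseteq> code_alphabet n U m K"
    using cs0(1) assms(4-6) by (auto simp: cs_def code_alphabet_def)
  moreover have "star_norm n U m (\<lambda>i u k. tensor_mat_mult n U d X A i u k
                               - code_tensor n U m d X M (eps / b\<^sup>2) K cs i u k) \<le> eps"
  proof (rule star_norm_le[OF assms(4,5)], intro allI impI)
    fix i u assume iu: "i < n" "u < U"
    have weight: "code_weight (eps / b\<^sup>2) K X cs l k = signed_sum (\<eta> k) x (Lf k) l" if "k < m" for l k
      using cs0(3)[OF that] by (simp add: cs_def code_weight_append code_weight_level_zero \<eta>_def x_def)
    have "(\<Sum>k<m. (tensor_mat_mult n U d X A i u k - code_tensor n U m d X M (eps / b\<^sup>2) K cs i u k)\<^sup>2)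
        \<le> (\<Sum>k<m. \<alpha> k * E)"
    proof (rule sum_mono)
      fix k assume "k \<in> {..<m}"
      then have "tensor_mat_mult n U d X A i u k - code_tensor n U m d X M (eps / b\<^sup>2) K cs i u k
          = (\<Sum>l<d. X i u l * A l k - X i u l * (M l k + signed_sum (\<eta> k) x (Lf k) l))"
        using iu by (simp add: tensor_mat_mult_def code_tensor_def weight sum_subtractf)
      also have "\<dots> = (\<Sum>l<d. (A l k - M l k - signed_sum (\<eta> k) x (Lf k) l) * x (i, u) l)"
        by (rule sum.cong) (simp_all add: x_def algebra_simps)
      finally show "(tensor_mat_mult n U d X A i u k - code_tensor n U m d X M (eps / b\<^sup>2) K cs i u k)\<^sup>2
          \<le> \<alpha> k * E"
        using Lf iu by (simp add: P_def)
    qed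
    also have "\<dots> = (\<Sum>k<m. \<alpha> k) * E" by (simp add: sum_distrib_right)
    also have "\<dots> \<le> a * E" using \<alpha>_sum \<open>a > 0\<close> by (intro mult_right_mono) (auto simp: E_def)
    also have "\<dots> \<le> eps\<^sup>2" unfolding E_def by (rule quantization_error_le[OF assms(1-3) K])
    finally show "sqrt (\<Sum>k<m. (tensor_mat_mult n U d X A i u k
                               - code_tensor n U m d X M (eps / b\<^sup>2) K cs i u k)\<^sup>2) \<le> eps"
      using \<open>eps > 0\<close> by (simp add: real_sqrt_le_iff real_le_lsqrt)
  qed
  ultimately show ?thesis using that by blast
qed

lemma covering_number_le_card:
  assumes "C \<subseteq> S" "finite C" "\<forall>v\<in>V. \<exists>c\<in>C. dist_fn v c \<le> eps"
  shows "covering_number S V eps dist_fn \<le> enat (card C)"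
  unfolding covering_number_def using assms by (intro INF_lower) auto

lemma ln_code_count_le:
  fixes K N v :: nat
  assumes "a > 0" "b > 0" "eps > 0" "n > 0" "U > 0" "m > 0"
    and K: "real K \<le> 4 * a * b / eps + 1" and N: "real N \<le> 8 * a\<^sup>2 * b\<^sup>2 / eps\<^sup>2"
    and v: "v \<le> card (code_alphabet n U m K) ^ N"
  shows "ln (real v) \<le> 64 * a\<^sup>2 * b\<^sup>2 / eps\<^sup>2 * log 2 ((8 * a * b / eps + 7) * real m * real n * real U)"
proof -
  define q where "q = real (card (code_alphabet n U m K))"
  define R where "R = (8 * a * b / eps + 7) * real m * real n * real U"
  have q: "q = real m * real n * real U * (2 * real K + 2)"
    by (simp add: q_def card_code_alphabet algebra_simps)
  have "0 < card (code_alphabet n U m K)" using assms(4-6) by (simp add: card_code_alphabet)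
  then have "1 \<le> q" by (simp add: q_def)
  have "q \<le> R"
  proof -
    have "real m * real n * real U * (2 * real K + 2) \<le> real m * real n * real U * (8 * a * b / eps + 7)"
      using K by (intro mult_left_mono) auto
    then show ?thesis unfolding q R_def by (simp only: ac_simps)
  qed
  have "0 \<le> ln q" using \<open>1 \<le> q\<close> by simp
  have "ln q \<le> log 2 R"
  proof -
    have "ln (2::real) \<le> 1" using ln_le_minus_one[of 2] by simp
    then have "ln q * ln 2 \<le> ln q" using \<open>0 \<le> ln q\<close> by (rule mult_left_le)
    also have "ln q \<le> ln R" using \<open>1 \<le> q\<close> \<open>q \<le> R\<close> by simp
    finally show ?thesis by (simp add: log_def le_divide_eq)
  qed
  have "ln (real v) \<le> real N * ln q"
  proof (cases "v = 0")
    case False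
    then have "ln (real v) \<le> ln (q ^ N)" using v \<open>1 \<le> q\<close>
      by (subst ln_le_cancel_iff) (auto simp: q_def simp flip: of_nat_power)
    then show ?thesis using \<open>1 \<le> q\<close> by (simp add: ln_realpow)
  qed (use \<open>0 \<le> ln q\<close> in simp)
  also have "\<dots> \<le> 8 * a\<^sup>2 * b\<^sup>2 / eps\<^sup>2 * ln q" using N \<open>0 \<le> ln q\<close> by (rule mult_right_mono)
  also have "\<dots> \<le> 8 * a\<^sup>2 * b\<^sup>2 / eps\<^sup>2 * log 2 R" using \<open>ln q \<le> log 2 R\<close> by (intro mult_left_mono) auto
  also have "\<dots> \<le> 64 * a\<^sup>2 * b\<^sup>2 / eps\<^sup>2 * log 2 R"
    using \<open>ln q \<le> log 2 R\<close> \<open>0 \<le> ln q\<close> by (intro mult_right_mono divide_right_mono) auto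
  finally show ?thesis unfolding R_def .
qed

theorem mainTheorem2:
  fixes a b eps :: real and n U d m :: nat
    and X :: "nat \<Rightarrow> nat \<Rightarrow> nat \<Rightarrow> real" and M :: "nat \<Rightarrow> nat \<Rightarrow> real"
  assumes "a > 0" "b > 0" "eps > 0"
    and "n > 0" "U > 0" "d > 0" "m > 0"
    and "\<forall>i<n. \<forall>u<U. sqrt (\<Sum>l<d. (X i u l)\<^sup>2) \<le> b"
  shows "covering_number (tensor_space n U m)
           {tensor_mat_mult n U d X A | A. (\<forall>l j. \<not>(l < d \<and> j < m) \<longrightarrow> A l j = 0)
                                        \<and> norm21 d m (\<lambda>l j. A l j - M l j) \<le> a}
           eps (\<lambda>Y Z. star_norm n U m (\<lambda>i u k. Y i u k - Z i u k)) \<noteq> \<infinity>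
       \<and> ln (real (the_enat (covering_number (tensor_space n U m)
           {tensor_mat_mult n U d X A | A. (\<forall>l j. \<not>(l < d \<and> j < m) \<longrightarrow> A l j = 0)
                                        \<and> norm21 d m (\<lambda>l j. A l j - M l j) \<le> a}
           eps (\<lambda>Y Z. star_norm n U m (\<lambda>i u k. Y i u k - Z i u k)))))
         \<le> 64 * a\<^sup>2 * b\<^sup>2 / eps\<^sup>2 * log 2 ((8 * a * b / eps + 7) * real m * real n * real U)"
    (is "?cov \<noteq> \<infinity> \<and> _")
proof -
  define K where "K = nat \<lceil>4 * a * b / eps\<rceil>"
  define N where "N = nat \<lfloor>8 * a\<^sup>2 * b\<^sup>2 / eps\<^sup>2\<rfloor>"
  define C where "C = code_tensor n U m d X M (eps / b\<^sup>2) K `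
                        {cs. set cs \<subseteq> code_alphabet n U m K \<and> length cs = N}"
  have "4 * a * b / eps > 0" using assms by simp
  then have K: "4 * a * b / eps \<le> real K" "real K \<le> 4 * a * b / eps + 1"
    unfolding K_def by linarith+
  have codes: "finite {cs. set cs \<subseteq> code_alphabet n U m K \<and> length cs = N}"
    "card {cs. set cs \<subseteq> code_alphabet n U m K \<and> length cs = N} = card (code_alphabet n U m K) ^ N"
    by (simp_all add: code_alphabet_def finite_lists_length_eq card_lists_length_eq)
  have "?cov \<le> enat (card C)"
  proof (rule covering_number_le_card)
    show "C \<subseteq> tensor_space n U m" by (auto simp: C_def code_tensor_def tensor_space_def)
    show "finite C" using codes by (simp add: C_def)
    show "\<forall>Y\<in>{tensor_mat_mult n U d X A | A. (\<forall>l j. \<not>(l < d \<and> j < m) \<longrightarrow> A l j = 0)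
                                        \<and> norm21 d m (\<lambda>l j. A l j - M l j) \<le> a}.
            \<exists>Z\<in>C. star_norm n U m (\<lambda>i u k. Y i u k - Z i u k) \<le> eps"
      using code_approximation[OF assms(1-5,7,8) K(1) N_def] by (auto simp: C_def) blast
  qed
  moreover have "card C \<le> card (code_alphabet n U m K) ^ N"
    unfolding C_def using card_image_le[OF codes(1)] codes(2) by simp
  ultimately obtain v where v: "?cov = enat v" "v \<le> card (code_alphabet n U m K) ^ N"
    by (cases ?cov) auto
  have "real N \<le> 8 * a\<^sup>2 * b\<^sup>2 / eps\<^sup>2" unfolding N_def by simp
  with v show ?thesis using ln_code_count_le[OF assms(1-5,7) K(2)] by simp
qed

end
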